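(* Let $A$ be a nonempty finite set of positive integers, let $n$ be a positive integer, and let $\alpha,\beta$ be positive integers with $\alpha\le\beta\le|A|$. Then: (a) If $\binom{|A|}{\alpha}=\sum_{d=1}^{\sup A}\mu(d)\binom{v(A,d)}{\alpha}$, then $\binom{|A|}{\beta}=\sum_{d=1}^{\sup A}\mu(d)\binom{v(A,d)}{\beta}$. (b) If $\binom{|A|}{\alpha}=\sum_{d\mid n}\mu(d)\binom{v(A,d)}{\alpha}$, then $\binom{|A|}{\beta}=\sum_{d\mid n}\mu(d)\binom{v(A,d)}{\beta}$. (c) If $\sum_{d=1}^{\sup A}\mu(d)\binom{v(A,d)}{\beta}=0$, then $\sum_{d=1}^{\sup A}\mu(d)\binom{v(A,d)}{\alpha}=0$. (d) If $\sum_{d\mid n}\mu(d)\binom{v(A,d)}{\beta}=0$, then $\sum_{d\mid n}\mu(d)\binom{v(A,d)}{\alpha}=0$.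
   Context: $\sup A$ is the largest element of $A$. $\mu$ is the Möbius function. For a positive integer $d$, $v(A,d)$ is the number of multiples of $d$ in $A$. Binomial coefficients $\binom{m}{k}$ are $0$ when $k>m$. *)

theory Defs
  imports "HOL-Computational_Algebra.Computational_Algebra"
begin

text \<open>The Moebius function on positive integers (value 0 at 0, which never occurs below).\<close>
definition moebius_mu :: "nat \<Rightarrow> int" where
  "moebius_mu d = (if d = 0 then 0
     else if squarefree d then (-1) ^ card (prime_factors d) else 0)"

definition v :: "nat set \<Rightarrow> nat \<Rightarrow> nat" where
  "v A d = card {a \<in> A. d dvd a}"

end

theory Submission
  imports Defs
begin

text \<open>Writing \<open>v(A,d) choose k\<close> as the number of \<open>k\<close>-subsets of \<open>A\<close> all of whose elements
  are divisible by \<open>d\<close> and exchanging sums, Moebius inversion shows that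
  \<open>\<Sum>\<^sub>d \<mu>(d) (v(A,d) choose k)\<close> counts the \<open>k\<close>-subsets of \<open>A\<close> that are relatively prime
  (summing over \<open>d \<le> sup A\<close>), resp. whose gcd is coprime to \<open>n\<close> (summing over \<open>d | n\<close>).
  Both properties pass from a set to its supersets. Since every \<open>\<beta>\<close>-subset contains an
  \<open>\<alpha>\<close>-subset and every \<open>\<alpha>\<close>-subset extends to a \<open>\<beta>\<close>-subset of \<open>A\<close>, if all \<open>\<alpha>\<close>-subsets
  have the property then so do all \<open>\<beta>\<close>-subsets, and if no \<open>\<beta>\<close>-subset has it then no
  \<open>\<alpha>\<close>-subset has it.\<close>

lemma sum_neg_one_power_card_Pow:
  assumes "finite P" "P \<noteq> {}"
  shows "(\<Sum>S\<in>Pow P. (-1::int) ^ card S) = 0"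
proof (rule sum_alternating_cancels)
  show "finite (Pow P)" using assms(1) by simp
  have "{} \<subset> P" using assms(2) by blast
  from card_subsupersets_even_odd[OF assms(1) this]
  show "card {S. S \<in> Pow P \<and> even (card S)} = card {S. S \<in> Pow P \<and> odd (card S)}"
    by simp
qed

lemma prod_primes_dvd:
  fixes m :: nat
  assumes "finite S" "\<And>p. p \<in> S \<Longrightarrow> prime p \<and> p dvd m"
  shows "\<Prod>S dvd m"
  using assms
proof (induction S rule: finite_induct)
  case (insert p S)
  have "coprime p (\<Prod>S)"
    using insert by (intro prod_coprime_right primes_coprime) auto
  then show ?case using insert by (simp add: divides_mult)
qed simp

lemma squarefree_nat_pos: "squarefree (d::nat) \<Longrightarrow> 0 < d"
  by (cases d) auto

lemma squarefree_prod_prime_factors: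
  fixes d :: nat
  assumes "squarefree d"
  shows "\<Prod>(prime_factors d) = d"
proof -
  have "d \<noteq> 0" using assms squarefree_nat_pos by blast
  then have "d = (\<Prod>p\<in>prime_factors d. p ^ multiplicity p d)"
    by (simp add: prod_prime_factors)
  also have "\<dots> = \<Prod>(prime_factors d)"
    using assms \<open>d \<noteq> 0\<close> by (intro prod.cong) (auto simp: squarefree_factorial_semiring')
  finally show ?thesis by simp
qed

lemma prime_factors_prod_primes:
  fixes S :: "nat set"
  assumes "finite S" "\<And>p. p \<in> S \<Longrightarrow> prime p"
  shows "prime_factors (\<Prod>S) = S"
proof -
  have "prime_factors (prod id S) = \<Union>((prime_factors \<circ> id) ` S)"
    using assms not_prime_0 by (intro prime_factors_prod) fastforce+
  then show ?thesis using assms by (auto simp: prime_prime_factors)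
qed

lemma bij_betw_squarefree_divisors_prime_factors:
  fixes m :: nat
  assumes "m > 0"
  shows "bij_betw prime_factors {d. d dvd m \<and> squarefree d} (Pow (prime_factors m))"
proof (rule bij_betw_byWitness[where f' = "\<lambda>S. \<Prod>S"])
  show "\<forall>d\<in>{d. d dvd m \<and> squarefree d}. \<Prod>(prime_factors d) = d"
    by (simp add: squarefree_prod_prime_factors)
  show "prime_factors ` {d. d dvd m \<and> squarefree d} \<subseteq> Pow (prime_factors m)"
    using assms by (auto simp: prime_factors_dvd intro: dvd_trans)
  have primes: "prime p \<and> p dvd m" if "S \<subseteq> prime_factors m" "p \<in> S" for S p
    using that by (auto simp: prime_factors_dvd)
  then show "\<forall>S\<in>Pow (prime_factors m). prime_factors (\<Prod>S) = S"
    by (auto intro!: prime_factors_prod_primes intro: finite_subset)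
  show "(\<lambda>S. \<Prod>S) ` Pow (prime_factors m) \<subseteq> {d. d dvd m \<and> squarefree d}"
  proof
    fix d assume "d \<in> (\<lambda>S. \<Prod>S) ` Pow (prime_factors m)"
    then obtain S where S: "S \<subseteq> prime_factors m" and d: "d = \<Prod>S" by auto
    then have "finite S" using finite_subset by blast
    with S primes have "\<Prod>S dvd m" by (blast intro: prod_primes_dvd)
    moreover from S primes have "squarefree (\<Prod>S)"
      by (intro squarefree_prod_coprime) (auto simp: primes_coprime squarefree_prime)
    ultimately show "d \<in> {d. d dvd m \<and> squarefree d}" using d by simp
  qed
qed

lemma sum_moebius_divisors:
  fixes m :: nat
  assumes "m > 0"
  shows "(\<Sum>d | d dvd m. moebius_mu d) = (if m = 1 then 1 else 0)"
proof -
  have "(\<Sum>d | d dvd m. moebius_mu d) = (\<Sum>d | d dvd m \<and> squarefree d. moebius_mu d)"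
    using assms by (intro sum.mono_neutral_right) (auto simp: moebius_mu_def dest: squarefree_nat_pos)
  also have "\<dots> = (\<Sum>d | d dvd m \<and> squarefree d. (-1) ^ card (prime_factors d))"
    by (intro sum.cong) (auto simp: moebius_mu_def dest: squarefree_nat_pos)
  also have "\<dots> = (\<Sum>S\<in>Pow (prime_factors m). (-1) ^ card S)"
    using sum.reindex_bij_betw[OF bij_betw_squarefree_divisors_prime_factors[OF assms],
        of "\<lambda>S. (-1::int) ^ card S"] by simp
  also have "\<dots> = (if m = 1 then 1 else 0)"
    using assms by (auto simp: prime_factorization_empty_iff intro: sum_neg_one_power_card_Pow)
  finally show ?thesis .
qed

lemma sum_weighted_v_choose:
  fixes A D :: "nat set" and f :: "nat \<Rightarrow> int"
  assumes "finite A" "finite D"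
  shows "(\<Sum>d\<in>D. f d * int (v A d choose k))
       = (\<Sum>X | X \<subseteq> A \<and> card X = k. \<Sum>d | d \<in> D \<and> (\<forall>x\<in>X. d dvd x). f d)"
proof -
  let ?K = "{X. X \<subseteq> A \<and> card X = k}"
  have fin: "finite ?K" using assms(1) by (auto intro: finite_subset[of _ "Pow A"])
  have choose: "int (v A d choose k) = (\<Sum>X\<in>?K. if \<forall>x\<in>X. d dvd x then 1 else 0)" for d
  proof -
    have "v A d choose k = card {X. X \<subseteq> {a\<in>A. d dvd a} \<and> card X = k}"
      unfolding v_def using assms(1) by (simp add: n_subsets)
    also have "{X. X \<subseteq> {a\<in>A. d dvd a} \<and> card X = k} = {X\<in>?K. \<forall>x\<in>X. d dvd x}" by auto
    finally show ?thesis using fin by (simp add: sum.If_cases Int_def conj_assoc)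
  qed
  have "(\<Sum>d\<in>D. f d * int (v A d choose k))
      = (\<Sum>X\<in>?K. \<Sum>d\<in>D. if \<forall>x\<in>X. d dvd x then f d else 0)"
    by (simp add: choose sum_distrib_left if_distrib cong: if_cong) (rule sum.swap)
  also have "\<dots> = (\<Sum>X\<in>?K. \<Sum>d | d \<in> D \<and> (\<forall>x\<in>X. d dvd x). f d)"
    using assms(2) by (simp add: sum.inter_filter)
  finally show ?thesis .
qed

lemma sum_moebius_v_choose_dvd:
  fixes A :: "nat set" and n :: nat
  assumes "finite A" "n > 0"
  shows "(\<Sum>d | d dvd n. moebius_mu d * int (v A d choose k))
       = int (card {X. X \<subseteq> A \<and> card X = k \<and> coprime (Gcd X) n})"
proof -
  have "(\<Sum>d | d \<in> {d. d dvd n} \<and> (\<forall>x\<in>X. d dvd x). moebius_mu d)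
      = (if coprime (Gcd X) n then 1 else 0)" for X
  proof -
    have "{d. d \<in> {d. d dvd n} \<and> (\<forall>x\<in>X. d dvd x)} = {d. d dvd gcd (Gcd X) n}"
      by (auto simp: dvd_Gcd_iff)
    then have "(\<Sum>d | d \<in> {d. d dvd n} \<and> (\<forall>x\<in>X. d dvd x). moebius_mu d)
        = (\<Sum>d | d dvd gcd (Gcd X) n. moebius_mu d)"
      by (simp only:)
    also have "\<dots> = (if gcd (Gcd X) n = 1 then 1 else 0)"
      using assms(2) by (intro sum_moebius_divisors) simp
    finally show ?thesis by (simp add: coprime_iff_gcd_eq_1)
  qed
  then show ?thesis
    using assms by (simp add: sum_weighted_v_choose sum.If_cases Int_def conj_assoc)
qed

lemma sum_moebius_v_choose_le_Max:
  fixes A :: "nat set"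
  assumes "finite A" "\<forall>a\<in>A. 0 < a" "k > 0"
  shows "(\<Sum>d=1..Max A. moebius_mu d * int (v A d choose k))
       = int (card {X. X \<subseteq> A \<and> card X = k \<and> Gcd X = 1})"
proof -
  have "(\<Sum>d | d \<in> {1..Max A} \<and> (\<forall>x\<in>X. d dvd x). moebius_mu d) = (if Gcd X = 1 then 1 else 0)"
    if X: "X \<subseteq> A" "card X = k" for X
  proof -
    obtain x where x: "x \<in> X" using X assms(3) by fastforce
    have "0 < x" "x \<le> Max A" using x X assms(1,2) by auto
    moreover have "Gcd X dvd x" using x by (rule Gcd_dvd)
    ultimately have "0 < Gcd X" "Gcd X \<le> Max A" by (auto dest: dvd_imp_le intro: Nat.gr0I)
    then have "{d. d \<in> {1..Max A} \<and> (\<forall>x\<in>X. d dvd x)} = {d. d dvd Gcd X}"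
      by (auto simp: dvd_Gcd_iff[symmetric] Suc_le_eq dest: dvd_imp_le intro: Nat.gr0I)
    then show ?thesis using \<open>0 < Gcd X\<close> by (simp add: sum_moebius_divisors)
  qed
  then have "(\<Sum>d=1..Max A. moebius_mu d * int (v A d choose k))
      = (\<Sum>X | X \<subseteq> A \<and> card X = k. if Gcd X = 1 then 1 else 0)"
    using assms(1) by (simp add: sum_weighted_v_choose)
  also have "\<dots> = int (card {X. X \<subseteq> A \<and> card X = k \<and> Gcd X = 1})"
    using assms(1) by (simp add: sum.If_cases Int_def conj_assoc finite_subset[of _ "Pow A"])
  finally show ?thesis .
qed

lemma card_subsets_with_eq_binomial_iff:
  assumes "finite A"
  shows "card A choose k = card {X. X \<subseteq> A \<and> card X = k \<and> P X}
     \<longleftrightarrow> (\<forall>X. X \<subseteq> A \<and> card X = k \<longrightarrow> P X)"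
proof -
  let ?K = "{X. X \<subseteq> A \<and> card X = k}"
  let ?KP = "{X. X \<subseteq> A \<and> card X = k \<and> P X}"
  have fin: "finite ?K" using assms by (auto intro: finite_subset[of _ "Pow A"])
  have "card A choose k = card ?KP \<longleftrightarrow> card ?KP = card ?K"
    by (auto simp: n_subsets assms)
  also have "\<dots> \<longleftrightarrow> ?KP = ?K"
    using card_subset_eq[OF fin, of ?KP] by auto
  also have "\<dots> \<longleftrightarrow> (\<forall>X. X \<subseteq> A \<and> card X = k \<longrightarrow> P X)"
    by blast
  finally show ?thesis .
qed

lemma card_subsets_with_eq_0_iff:
  assumes "finite A"
  shows "card {X. X \<subseteq> A \<and> card X = k \<and> P X} = 0
     \<longleftrightarrow> (\<forall>X. X \<subseteq> A \<and> card X = k \<longrightarrow> \<not> P X)"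
proof -
  have "finite {X. X \<subseteq> A \<and> card X = k \<and> P X}"
    using assms by (auto intro: finite_subset[of _ "Pow A"])
  then show ?thesis by auto
qed

lemma all_card_subsets_if_mono_on:
  assumes "finite A" "\<alpha> \<le> \<beta>" "mono_on (Pow A) P"
    and all: "\<forall>X. X \<subseteq> A \<and> card X = \<alpha> \<longrightarrow> P X"
  shows "\<forall>Y. Y \<subseteq> A \<and> card Y = \<beta> \<longrightarrow> P Y"
proof (intro allI impI, elim conjE)
  fix Y assume Y: "Y \<subseteq> A" "card Y = \<beta>"
  then obtain X where X: "X \<subseteq> Y" "card X = \<alpha>"
    using assms(2) by (metis obtain_subset_with_card_n)
  then have "P X" using Y all by auto
  moreover have "P X \<le> P Y" using mono_onD[OF assms(3), of X Y] X(1) Y(1) by auto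
  ultimately show "P Y" by (simp add: le_bool_def)
qed

lemma no_card_subsets_if_mono_on:
  assumes "finite A" "\<alpha> \<le> \<beta>" "\<beta> \<le> card A" "mono_on (Pow A) P"
    and none: "\<forall>Y. Y \<subseteq> A \<and> card Y = \<beta> \<longrightarrow> \<not> P Y"
  shows "\<forall>X. X \<subseteq> A \<and> card X = \<alpha> \<longrightarrow> \<not> P X"
proof (intro allI impI notI, elim conjE)
  fix X assume X: "X \<subseteq> A" "card X = \<alpha>" "P X"
  have "finite X" using X(1) assms(1) finite_subset by blast
  then have "\<beta> - \<alpha> \<le> card (A - X)" using X assms(1-3) by (simp add: card_Diff_subset)
  then obtain Z where Z: "Z \<subseteq> A - X" "card Z = \<beta> - \<alpha>" "finite Z"
    by (rule obtain_subset_with_card_n)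
  have "card (X \<union> Z) = \<beta>"
    using Z X \<open>finite X\<close> assms(2) by (subst card_Un_disjoint) auto
  moreover have "X \<union> Z \<subseteq> A" using X Z by auto
  moreover have "P (X \<union> Z)"
    using mono_onD[OF assms(4), of X "X \<union> Z"] X \<open>X \<union> Z \<subseteq> A\<close> by (auto simp: le_bool_def)
  ultimately show False using none by simp
qed

lemma card_subsets_transfer_if_mono_on:
  assumes "finite A" "\<alpha> \<le> \<beta>" "\<beta> \<le> card A" "mono_on (Pow A) P"
  shows "(card A choose \<alpha> = card {X. X \<subseteq> A \<and> card X = \<alpha> \<and> P X}
            \<longrightarrow> card A choose \<beta> = card {X. X \<subseteq> A \<and> card X = \<beta> \<and> P X})
       \<and> (card {X. X \<subseteq> A \<and> card X = \<beta> \<and> P X} = 0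
            \<longrightarrow> card {X. X \<subseteq> A \<and> card X = \<alpha> \<and> P X} = 0)"
  unfolding card_subsets_with_eq_binomial_iff[OF assms(1)] card_subsets_with_eq_0_iff[OF assms(1)]
  using all_card_subsets_if_mono_on[OF assms(1,2,4)] no_card_subsets_if_mono_on[OF assms]
  by (intro conjI impI)

lemma Gcd_dvd_Gcd_subset:
  fixes X Y :: "'a::semiring_Gcd set"
  assumes "X \<subseteq> Y"
  shows "Gcd Y dvd Gcd X"
  using assms by (auto intro: Gcd_greatest Gcd_dvd)

lemma mono_coprime_Gcd: "mono (\<lambda>X :: 'a::semiring_Gcd set. coprime (Gcd X) c)"
proof (rule monoI)
  fix X Y :: "'a set" assume "X \<subseteq> Y"
  then have "Gcd Y dvd Gcd X" by (rule Gcd_dvd_Gcd_subset)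
  then show "coprime (Gcd X) c \<le> coprime (Gcd Y) c"
    using coprime_divisors[OF _ dvd_refl] by (auto simp: le_bool_def)
qed

lemma mono_Gcd_eq_1: "mono (\<lambda>X :: nat set. Gcd X = 1)"
proof (rule monoI)
  fix X Y :: "nat set" assume "X \<subseteq> Y"
  then have "Gcd Y dvd Gcd X" by (rule Gcd_dvd_Gcd_subset)
  then show "(Gcd X = 1) \<le> (Gcd Y = 1)" by (auto simp: le_bool_def)
qed

theorem corollary5p3:
  fixes A :: "nat set" and n \<alpha> \<beta> :: nat
  assumes "finite A" and "A \<noteq> {}" and "\<forall>a\<in>A. 0 < a"
    and "0 < n" and "0 < \<alpha>" and "\<alpha> \<le> \<beta>" and "\<beta> \<le> card A"
  shows "(int (card A choose \<alpha>) = (\<Sum>d=1..Max A. moebius_mu d * int (v A d choose \<alpha>))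
            \<longrightarrow> int (card A choose \<beta>) = (\<Sum>d=1..Max A. moebius_mu d * int (v A d choose \<beta>)))
       \<and> (int (card A choose \<alpha>) = (\<Sum>d\<in>{d. d dvd n}. moebius_mu d * int (v A d choose \<alpha>))
            \<longrightarrow> int (card A choose \<beta>) = (\<Sum>d\<in>{d. d dvd n}. moebius_mu d * int (v A d choose \<beta>)))
       \<and> ((\<Sum>d=1..Max A. moebius_mu d * int (v A d choose \<beta>)) = 0
            \<longrightarrow> (\<Sum>d=1..Max A. moebius_mu d * int (v A d choose \<alpha>)) = 0)
       \<and> ((\<Sum>d\<in>{d. d dvd n}. moebius_mu d * int (v A d choose \<beta>)) = 0
            \<longrightarrow> (\<Sum>d\<in>{d. d dvd n}. moebius_mu d * int (v A d choose \<alpha>)) = 0)"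
proof -
  have "0 < \<beta>" using assms(5,6) by simp
  note relatively_prime = card_subsets_transfer_if_mono_on[OF assms(1,6,7)
      mono_imp_mono_on[OF mono_Gcd_eq_1]]
  note coprime_to_n = card_subsets_transfer_if_mono_on[OF assms(1,6,7)
      mono_imp_mono_on[OF mono_coprime_Gcd[where c = n]]]
  show ?thesis
    using relatively_prime coprime_to_n
    unfolding sum_moebius_v_choose_le_Max[OF assms(1,3,5)]
      sum_moebius_v_choose_le_Max[OF assms(1,3) \<open>0 < \<beta>\<close>]
      sum_moebius_v_choose_dvd[OF assms(1,4)] of_nat_eq_iff of_nat_eq_0_iff
    by argo
qed

end
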